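(* Let $\mathcal{C}\subseteq\mathbb{R}[x_1,\dots,x_n]$ be convex and closed in the LF-topology and let $A\in\mathfrak{d}$. For $d\in\mathbb{N}_0$ set $A_d:=A|_{\mathbb{R}[x_1,\dots,x_n]_{\le d}}$ and $\mathcal{C}_d:=\mathcal{C}\cap\mathbb{R}[x_1,\dots,x_n]_{\le d}$. If for every $d\in\mathbb{N}_0$ there exists $\varepsilon_d>0$ such that $(\mathbb{1}+\lambda A_d)\mathcal{C}_d\subseteq\mathcal{C}_d$ for all $\lambda\in[0,\varepsilon_d)$, then $A\in\mathfrak{d}_\mathcal{C}$.
   Context: $\mathfrak{d}$ is the set of linear maps $\sum_\alpha q_\alpha\partial^\alpha$ on $\mathbb{R}[x_1,\dots,x_n]$ with $q_\alpha\in\mathbb{R}[x_1,\dots,x_n]_{\le|\alpha|}$; they preserve each $\mathbb{R}[x_1,\dots,x_n]_{\le d}$, so $e^{tA}=\sum_kt^kA^k/k!$ is well defined. $\mathfrak{D}\subseteq\mathfrak{d}$ consists of the injective elements; $\mathfrak{D}_\mathcal{C}=\{T\in\mathfrak{D}: T\mathcal{C}\subseteq\mathcal{C}\}$ and $\mathfrak{d}_\mathcal{C}=\{A\in\mathfrak{d}: e^{tA}\in\mathfrak{D}_\mathcal{C}\ \forall t\ge0\}$. $\mathbb{1}$ is the identity. The LF-topology is the inductive limit topology of the finite-dimensional spaces $\mathbb{R}[x_1,\dots,x_n]_{\le d}$. *)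

theory Defs
  imports "HOL-Analysis.Analysis"
begin

text \<open>Real polynomials in the variables x_0,...,x_(n-1) are represented by their
coefficient functions: a polynomial is a map from exponent vectors
(alpha :: nat => nat, with alpha i = 0 for i >= n) to real coefficients.
The function type carries the product topology (HOL-Analysis, Function_Topology),
which on each finite-dimensional space of polynomials of degree at most d is the
Euclidean topology.\<close>

type_synonym mono = "nat \<Rightarrow> nat"
type_synonym rpoly = "mono \<Rightarrow> real"

definition mdeg :: "nat \<Rightarrow> mono \<Rightarrow> nat" where
  "mdeg n \<alpha> = (\<Sum>i<n. \<alpha> i)"

definition Mon :: "nat \<Rightarrow> nat \<Rightarrow> mono set" where
  "Mon n d = {\<alpha>. (\<forall>i\<ge>n. \<alpha> i = 0) \<and> mdeg n \<alpha> \<le> d}"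

definition Pd :: "nat \<Rightarrow> nat \<Rightarrow> rpoly set" where
  "Pd n d = {p. \<forall>\<alpha>. p \<alpha> \<noteq> 0 \<longrightarrow> \<alpha> \<in> Mon n d}"

definition Pol :: "nat \<Rightarrow> rpoly set" where
  "Pol n = (\<Union>d. Pd n d)"

definition padd :: "rpoly \<Rightarrow> rpoly \<Rightarrow> rpoly" where
  "padd p q = (\<lambda>\<beta>. p \<beta> + q \<beta>)"

definition pscale :: "real \<Rightarrow> rpoly \<Rightarrow> rpoly" where
  "pscale c p = (\<lambda>\<beta>. c * p \<beta>)"

definition pmul :: "rpoly \<Rightarrow> rpoly \<Rightarrow> rpoly" where
  "pmul p q = (\<lambda>\<gamma>. \<Sum>\<alpha>\<in>{\<alpha>. \<forall>i. \<alpha> i \<le> \<gamma> i}. p \<alpha> * q (\<lambda>i. \<gamma> i - \<alpha> i))"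

definition pdiff :: "nat \<Rightarrow> mono \<Rightarrow> rpoly \<Rightarrow> rpoly" where
  "pdiff n \<alpha> p = (\<lambda>\<beta>. (\<Prod>i<n. fact (\<beta> i + \<alpha> i) / fact (\<beta> i)) * p (\<lambda>i. \<beta> i + \<alpha> i))"

text \<open>The set frak-d: operators sum_alpha q_alpha d^alpha with deg q_alpha <= |alpha|,
regarded as maps on R[x_1..x_n] (only their values on polynomials matter).\<close>
definition dops :: "nat \<Rightarrow> (rpoly \<Rightarrow> rpoly) set" where
  "dops n = {A. \<exists>q :: mono \<Rightarrow> rpoly.
      (\<forall>\<alpha>. (\<forall>i\<ge>n. \<alpha> i = 0) \<longrightarrow> q \<alpha> \<in> Pd n (mdeg n \<alpha>)) \<and>
      (\<forall>d. \<forall>p\<in>Pd n d. A p = (\<lambda>\<beta>. \<Sum>\<alpha>\<in>Mon n d. pmul (q \<alpha>) (pdiff n \<alpha> p) \<beta>))}"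

definition Dops :: "nat \<Rightarrow> (rpoly \<Rightarrow> rpoly) set" where
  "Dops n = {T\<in>dops n. inj_on T (Pol n)}"

definition Dops_C :: "nat \<Rightarrow> rpoly set \<Rightarrow> (rpoly \<Rightarrow> rpoly) set" where
  "Dops_C n C = {T\<in>Dops n. T ` C \<subseteq> C}"

text \<open>e^{tA} p = sum_k t^k A^k p / k!; the series is evaluated coefficientwise
(it lives in the finite-dimensional space R[x]_{<= d} containing p).\<close>
definition op_exp :: "real \<Rightarrow> (rpoly \<Rightarrow> rpoly) \<Rightarrow> rpoly \<Rightarrow> rpoly" where
  "op_exp t A p = (\<lambda>\<beta>. \<Sum>k. (t ^ k / fact k) * (A ^^ k) p \<beta>)"

definition dops_C :: "nat \<Rightarrow> rpoly set \<Rightarrow> (rpoly \<Rightarrow> rpoly) set" where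
  "dops_C n C = {A\<in>dops n. \<forall>t\<ge>0. op_exp t A \<in> Dops_C n C}"

definition pconvex :: "rpoly set \<Rightarrow> bool" where
  "pconvex C \<longleftrightarrow> (\<forall>p\<in>C. \<forall>q\<in>C. \<forall>u::real. 0 \<le> u \<and> u \<le> 1 \<longrightarrow>
      padd (pscale u p) (pscale (1 - u) q) \<in> C)"

text \<open>Closedness in the LF-topology = inductive limit (final) topology of the
spaces R[x]_{<= d}: C is closed iff every C intersected with R[x]_{<= d} is closed in R[x]_{<= d}.\<close>
definition LF_closed :: "nat \<Rightarrow> rpoly set \<Rightarrow> bool" where
  "LF_closed n C \<longleftrightarrow> (\<forall>d. closedin (top_of_set (Pd n d)) (C \<inter> Pd n d))"

end

(* The exponential e^{tA} p is the limit of the Euler polygons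
   (1 + (t/m) A)^m p = \<Sum>j\<le>m. (m choose j) (t/m)^j A^j p,
   which by hypothesis lie in C_d once t/m < \<epsilon>_d; since C_d is closed in the
   finite-dimensional space of polynomials of degree at most d, e^{tA} p \<in> C. Moreover e^{tA} is linear and degree-preserving,
   hence again in frak-d: every such map T equals \<Sum>\<alpha> q_\<alpha> \<partial>^\<alpha>, the coefficients q_\<beta>
   being determined by recursion on |\<beta>| from the values T x^\<beta>. Finally e^{tA} is
   injective because e^{-tA} e^{tA} = 1 by the Cauchy product formula. *)

theory Submission
  imports Defs
begin

section \<open>Monomials and the spaces of bounded degree\<close>

definition supported :: "nat \<Rightarrow> mono \<Rightarrow> bool" where
  "supported n \<alpha> \<longleftrightarrow> (\<forall>i\<ge>n. \<alpha> i = 0)"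

definition monomial :: "mono \<Rightarrow> rpoly" where
  "monomial \<beta> = (\<lambda>\<gamma>. if \<gamma> = \<beta> then 1 else 0)"

lemma Mon_iff: "\<alpha> \<in> Mon n d \<longleftrightarrow> supported n \<alpha> \<and> mdeg n \<alpha> \<le> d"
  by (simp add: Mon_def supported_def)

lemma Pd_iff: "p \<in> Pd n d \<longleftrightarrow> (\<forall>\<alpha>. \<alpha> \<notin> Mon n d \<longrightarrow> p \<alpha> = 0)"
  unfolding Pd_def by blast

lemma PdD: "p \<in> Pd n d \<Longrightarrow> \<alpha> \<notin> Mon n d \<Longrightarrow> p \<alpha> = 0"
  unfolding Pd_iff by blast

lemma Pol_iff: "p \<in> Pol n \<longleftrightarrow> (\<exists>d. p \<in> Pd n d)"
  by (simp add: Pol_def)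

lemma mdeg_add: "mdeg n (\<lambda>i. \<alpha> i + \<beta> i) = mdeg n \<alpha> + mdeg n \<beta>"
  by (simp add: mdeg_def sum.distrib)

lemma mdeg_mono: "\<alpha> \<le> \<beta> \<Longrightarrow> mdeg n \<alpha> \<le> mdeg n \<beta>"
  unfolding mdeg_def le_fun_def by (intro sum_mono) auto

lemma mdeg_diff: "\<alpha> \<le> \<beta> \<Longrightarrow> mdeg n (\<lambda>i. \<beta> i - \<alpha> i) + mdeg n \<alpha> = mdeg n \<beta>"
  by (subst mdeg_add[symmetric]) (simp add: le_fun_def)

lemma mdeg_strict_mono:
  assumes "supported n \<beta>" and "\<alpha> < \<beta>"
  shows "mdeg n \<alpha> < mdeg n \<beta>"
proof -
  obtain j where le: "\<alpha> \<le> \<beta>" and j: "\<alpha> j < \<beta> j"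
    using \<open>\<alpha> < \<beta>\<close> by (auto simp: less_fun_def le_fun_def not_le)
  with assms(1) have "j < n" unfolding supported_def by (metis not_le not_less0)
  with le j show ?thesis
    unfolding mdeg_def by (intro sum_strict_mono_ex1) (auto simp: le_fun_def)
qed

lemma supported_le: "supported n \<beta> \<Longrightarrow> \<alpha> \<le> \<beta> \<Longrightarrow> supported n \<alpha>"
  by (auto simp: supported_def le_fun_def) (metis le_zero_eq)

lemma finite_Mon: "finite (Mon n d)"
proof (rule finite_subset)
  show "Mon n d \<subseteq> {f. \<forall>i. (i \<in> {..<n} \<longrightarrow> f i \<in> {..d}) \<and> (i \<notin> {..<n} \<longrightarrow> f i = 0)}"
  proof (intro subsetI CollectI allI conjI impI)
    fix \<alpha> i assume \<alpha>: "\<alpha> \<in> Mon n d"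
    show "\<alpha> i = 0" if "i \<notin> {..<n}" using \<alpha> that by (simp add: Mon_def)
    assume "i \<in> {..<n}"
    then have "\<alpha> i \<le> mdeg n \<alpha>" unfolding mdeg_def by (intro member_le_sum) auto
    with \<alpha> show "\<alpha> i \<in> {..d}" by (simp add: Mon_def)
  qed
qed (rule finite_set_of_finite_funs; simp)

lemma finite_atMost_supported: "supported n \<gamma> \<Longrightarrow> finite {..\<gamma>}"
  by (rule finite_subset[OF _ finite_Mon[of n "mdeg n \<gamma>"]])
     (auto simp: Mon_iff intro: supported_le mdeg_mono)

lemma Mon_mono: "d \<le> e \<Longrightarrow> Mon n d \<subseteq> Mon n e"
  by (auto simp: Mon_def)

lemma Pd_mono: "d \<le> e \<Longrightarrow> p \<in> Pd n d \<Longrightarrow> p \<in> Pd n e"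
  unfolding Pd_def using Mon_mono by blast

lemma Pd_subset_Pol: "p \<in> Pd n d \<Longrightarrow> p \<in> Pol n"
  by (auto simp: Pol_def)

lemma Pol_common_degree:
  assumes "p \<in> Pol n" and "q \<in> Pol n"
  obtains d where "p \<in> Pd n d" and "q \<in> Pd n d"
proof -
  obtain d1 d2 where "p \<in> Pd n d1" and "q \<in> Pd n d2" using assms by (auto simp: Pol_iff)
  then show thesis by (meson that Pd_mono max.cobounded1 max.cobounded2)
qed

lemma Pol_unsupported: "q \<in> Pol n \<Longrightarrow> \<not> supported n \<gamma> \<Longrightarrow> q \<gamma> = 0"
  by (auto simp: Pol_iff Mon_iff dest: PdD)

lemma Pd_zero: "(\<lambda>\<gamma>. 0) \<in> Pd n d"
  unfolding Pd_iff by auto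

lemma Pd_scale: "p \<in> Pd n d \<Longrightarrow> (\<lambda>\<gamma>. a * p \<gamma>) \<in> Pd n d"
  unfolding Pd_iff by auto

lemma Pd_divide: "p \<in> Pd n d \<Longrightarrow> (\<lambda>\<gamma>. p \<gamma> / a) \<in> Pd n d"
  unfolding Pd_iff by auto

lemma Pd_diff: "p \<in> Pd n d \<Longrightarrow> q \<in> Pd n d \<Longrightarrow> (\<lambda>\<gamma>. p \<gamma> - q \<gamma>) \<in> Pd n d"
  unfolding Pd_iff by auto

lemma Pd_lincomb: "p \<in> Pd n d \<Longrightarrow> q \<in> Pd n d \<Longrightarrow> (\<lambda>\<gamma>. a * p \<gamma> + b * q \<gamma>) \<in> Pd n d"
  unfolding Pd_iff by auto

lemma Pd_sum: "(\<And>i. i \<in> I \<Longrightarrow> f i \<in> Pd n d) \<Longrightarrow> (\<lambda>\<gamma>. \<Sum>i\<in>I. f i \<gamma>) \<in> Pd n d"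
  unfolding Pd_iff by auto

lemma monomial_in_Pd: "\<beta> \<in> Mon n d \<Longrightarrow> monomial \<beta> \<in> Pd n d"
  unfolding Pd_iff monomial_def by auto

lemma monomial_in_Pd_mdeg: "supported n \<beta> \<Longrightarrow> monomial \<beta> \<in> Pd n (mdeg n \<beta>)"
  by (rule monomial_in_Pd) (simp add: Mon_iff)

lemma Pd_monomial_expansion: "p \<in> Pd n d \<Longrightarrow> p = (\<lambda>\<gamma>. \<Sum>\<beta>\<in>Mon n d. p \<beta> * monomial \<beta> \<gamma>)"
  by (rule ext) (auto simp: monomial_def finite_Mon PdD if_distrib cong: if_cong)

section \<open>Degree-preserving linear maps\<close>

definition pol_linear :: "nat \<Rightarrow> (rpoly \<Rightarrow> rpoly) \<Rightarrow> bool" where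
  "pol_linear n T \<longleftrightarrow> (\<forall>p\<in>Pol n. \<forall>q\<in>Pol n. \<forall>a b.
     T (\<lambda>\<gamma>. a * p \<gamma> + b * q \<gamma>) = (\<lambda>\<gamma>. a * T p \<gamma> + b * T q \<gamma>))"

definition deg_preserving :: "nat \<Rightarrow> (rpoly \<Rightarrow> rpoly) \<Rightarrow> bool" where
  "deg_preserving n T \<longleftrightarrow> (\<forall>d. \<forall>p\<in>Pd n d. T p \<in> Pd n d)"

lemma deg_preservingD: "deg_preserving n T \<Longrightarrow> p \<in> Pd n d \<Longrightarrow> T p \<in> Pd n d"
  unfolding deg_preserving_def by blast

lemma pol_linearD: "pol_linear n T \<Longrightarrow> p \<in> Pol n \<Longrightarrow> q \<in> Pol n \<Longrightarrow>
    T (\<lambda>\<gamma>. a * p \<gamma> + b * q \<gamma>) = (\<lambda>\<gamma>. a * T p \<gamma> + b * T q \<gamma>)"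
  unfolding pol_linear_def by blast

lemma pol_linear_zero: "pol_linear n T \<Longrightarrow> T (\<lambda>\<gamma>. 0) = (\<lambda>\<gamma>. 0)"
  using pol_linearD[of n T "\<lambda>\<gamma>. 0" "\<lambda>\<gamma>. 0" 0 0] Pd_zero Pd_subset_Pol by simp

lemma pol_linear_sum:
  assumes T: "pol_linear n T" and "finite I" and f: "\<And>i. i \<in> I \<Longrightarrow> f i \<in> Pd n d"
  shows "T (\<lambda>\<gamma>. \<Sum>i\<in>I. c i * f i \<gamma>) = (\<lambda>\<gamma>. \<Sum>i\<in>I. c i * T (f i) \<gamma>)"
  using \<open>finite I\<close> f
proof (induction I rule: finite_induct)
  case empty
  then show ?case using pol_linear_zero[OF T] by simp
next
  case (insert x F)
  have "(\<lambda>\<gamma>. \<Sum>i\<in>F. c i * f i \<gamma>) \<in> Pd n d"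
    using insert by (intro Pd_sum Pd_scale) auto
  then have "T (\<lambda>\<gamma>. c x * f x \<gamma> + 1 * (\<Sum>i\<in>F. c i * f i \<gamma>))
      = (\<lambda>\<gamma>. c x * T (f x) \<gamma> + 1 * T (\<lambda>\<gamma>. \<Sum>i\<in>F. c i * f i \<gamma>) \<gamma>)"
    using insert.prems by (intro pol_linearD[OF T] Pd_subset_Pol) auto
  with insert show ?case by simp
qed

lemma pol_linear_monomial_expansion:
  assumes "pol_linear n T" and p: "p \<in> Pd n d"
  shows "T p = (\<lambda>\<gamma>. \<Sum>\<beta>\<in>Mon n d. p \<beta> * T (monomial \<beta>) \<gamma>)"
  by (subst Pd_monomial_expansion[OF p])
     (rule pol_linear_sum[OF assms(1) finite_Mon monomial_in_Pd])

lemma pol_linear_comp: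
  assumes "pol_linear n S" "pol_linear n T" "deg_preserving n T"
  shows "pol_linear n (S \<circ> T)"
  unfolding pol_linear_def
proof (intro ballI allI)
  fix p q a b assume pq: "p \<in> Pol n" "q \<in> Pol n"
  then have "T p \<in> Pol n" "T q \<in> Pol n"
    using assms(3) by (auto simp: Pol_iff dest: deg_preservingD)
  with pq assms(1,2) show "(S \<circ> T) (\<lambda>\<gamma>. a * p \<gamma> + b * q \<gamma>) = (\<lambda>\<gamma>. a * (S \<circ> T) p \<gamma> + b * (S \<circ> T) q \<gamma>)"
    by (simp add: pol_linearD)
qed

lemma deg_preserving_comp: "deg_preserving n S \<Longrightarrow> deg_preserving n T \<Longrightarrow> deg_preserving n (S \<circ> T)"
  unfolding deg_preserving_def by auto

lemma
  assumes "pol_linear n A" "deg_preserving n A"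
  shows pol_linear_funpow: "pol_linear n (A ^^ k)"
    and deg_preserving_funpow: "deg_preserving n (A ^^ k)"
proof -
  have "pol_linear n (A ^^ k) \<and> deg_preserving n (A ^^ k)"
  proof (induction k)
    case 0
    then show ?case by (simp add: pol_linear_def deg_preserving_def)
  next
    case (Suc k)
    then show ?case using assms pol_linear_comp deg_preserving_comp by (metis funpow.simps(2))
  qed
  then show "pol_linear n (A ^^ k)" "deg_preserving n (A ^^ k)" by auto
qed

section \<open>The operators in frak-d are the degree-preserving linear maps\<close>

definition diff_op :: "nat \<Rightarrow> (mono \<Rightarrow> rpoly) \<Rightarrow> nat \<Rightarrow> rpoly \<Rightarrow> rpoly" where
  "diff_op n q d p = (\<lambda>\<beta>. \<Sum>\<alpha>\<in>Mon n d. pmul (q \<alpha>) (pdiff n \<alpha> p) \<beta>)"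

lemma dops_iff:
  "A \<in> dops n \<longleftrightarrow> (\<exists>q. (\<forall>\<alpha>. supported n \<alpha> \<longrightarrow> q \<alpha> \<in> Pd n (mdeg n \<alpha>)) \<and>
     (\<forall>d. \<forall>p\<in>Pd n d. A p = diff_op n q d p))"
  by (simp add: dops_def diff_op_def supported_def)

lemma pmul_eq_sum_atMost: "pmul p q \<gamma> = (\<Sum>\<alpha>\<in>{..\<gamma>}. p \<alpha> * q (\<lambda>i. \<gamma> i - \<alpha> i))"
  by (simp add: pmul_def le_fun_def atMost_def)

lemma pmul_lincomb_right:
  "pmul q (\<lambda>\<gamma>. a * f \<gamma> + b * g \<gamma>) = (\<lambda>\<gamma>. a * pmul q f \<gamma> + b * pmul q g \<gamma>)"
  unfolding pmul_def by (auto simp: sum.distrib sum_distrib_left algebra_simps intro!: ext)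

lemma pmul_scale_right: "pmul q (\<lambda>\<gamma>. c * f \<gamma>) = (\<lambda>\<gamma>. c * pmul q f \<gamma>)"
  using pmul_lincomb_right[of q c f 0 f] by simp

lemma pmul_Pd:
  assumes p: "p \<in> Pd n a" and q: "q \<in> Pd n b"
  shows "pmul p q \<in> Pd n (a + b)"
  unfolding Pd_iff
proof (intro allI impI)
  fix \<gamma> assume \<gamma>: "\<gamma> \<notin> Mon n (a + b)"
  show "pmul p q \<gamma> = 0"
  proof (rule ccontr)
    assume "pmul p q \<gamma> \<noteq> 0"
    then obtain \<alpha> where "\<alpha> \<le> \<gamma>" and "p \<alpha> * q (\<lambda>i. \<gamma> i - \<alpha> i) \<noteq> 0"
      unfolding pmul_eq_sum_atMost by (meson atMost_iff sum.not_neutral_contains_not_neutral)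
    then have "\<alpha> \<in> Mon n a" and "(\<lambda>i. \<gamma> i - \<alpha> i) \<in> Mon n b"
      using p q PdD by fastforce+
    with \<open>\<alpha> \<le> \<gamma>\<close> have "\<gamma> \<in> Mon n (a + b)"
      using mdeg_diff[of \<alpha> \<gamma> n] by (auto simp: Mon_iff supported_def le_fun_def)
    with \<gamma> show False ..
  qed
qed

lemma pmul_monomial_zero_right:
  assumes "q \<in> Pol n"
  shows "pmul q (monomial (\<lambda>i. 0)) = q"
proof
  fix \<gamma> :: mono
  have diff_zero: "(\<lambda>i. \<gamma> i - \<alpha> i) = (\<lambda>i. 0) \<longleftrightarrow> \<alpha> = \<gamma>" if "\<alpha> \<le> \<gamma>" for \<alpha>
    using that unfolding le_fun_def fun_eq_iff by (metis diff_is_0_eq diff_self_eq_0 le_antisym)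
  show "pmul q (monomial (\<lambda>i. 0)) \<gamma> = q \<gamma>"
  proof (cases "finite {..\<gamma>}")
    case True
    then show ?thesis
      by (simp add: pmul_eq_sum_atMost monomial_def diff_zero if_distrib cong: if_cong)
  next
    case False
    then have "\<not> supported n \<gamma>" using finite_atMost_supported by blast
    with False show ?thesis
      using assms by (simp add: pmul_eq_sum_atMost Pol_unsupported)
  qed
qed

lemma pdiff_lincomb:
  "pdiff n \<alpha> (\<lambda>\<gamma>. a * f \<gamma> + b * g \<gamma>) = (\<lambda>\<gamma>. a * pdiff n \<alpha> f \<gamma> + b * pdiff n \<alpha> g \<gamma>)"
  unfolding pdiff_def by (auto simp: algebra_simps intro!: ext)

lemma pdiff_Pd:
  assumes p: "p \<in> Pd n d"
  shows "pdiff n \<alpha> p \<in> Pd n (d - mdeg n \<alpha>)"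
  unfolding Pd_iff
proof (intro allI impI)
  fix \<beta> assume \<beta>: "\<beta> \<notin> Mon n (d - mdeg n \<alpha>)"
  have "(\<lambda>i. \<beta> i + \<alpha> i) \<notin> Mon n d"
  proof
    assume "(\<lambda>i. \<beta> i + \<alpha> i) \<in> Mon n d"
    then have "supported n \<beta>" and "mdeg n \<beta> + mdeg n \<alpha> \<le> d"
      by (auto simp: Mon_iff supported_def mdeg_add)
    with \<beta> show False by (simp add: Mon_iff)
  qed
  with p show "pdiff n \<alpha> p \<beta> = 0" by (simp add: pdiff_def PdD)
qed

lemma pdiff_monomial:
  "pdiff n \<alpha> (monomial \<beta>) =
     (if \<alpha> \<le> \<beta> then (\<lambda>\<gamma>. (\<Prod>i<n. fact (\<beta> i) / fact (\<beta> i - \<alpha> i)) * monomial (\<lambda>i. \<beta> i - \<alpha> i) \<gamma>)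
      else (\<lambda>\<gamma>. 0))"
proof -
  have shift: "(\<lambda>i. \<gamma> i + \<alpha> i) = \<beta> \<longleftrightarrow> \<alpha> \<le> \<beta> \<and> \<gamma> = (\<lambda>i. \<beta> i - \<alpha> i)" for \<gamma>
  proof
    assume "(\<lambda>i. \<gamma> i + \<alpha> i) = \<beta>"
    then show "\<alpha> \<le> \<beta> \<and> \<gamma> = (\<lambda>i. \<beta> i - \<alpha> i)" by (auto simp: le_fun_def)
  qed (auto simp: le_fun_def fun_eq_iff)
  show ?thesis
    by (rule ext) (auto simp: pdiff_def monomial_def shift le_fun_def)
qed

lemma diff_op_lincomb:
  "diff_op n q d (\<lambda>\<gamma>. a * f \<gamma> + b * g \<gamma>) = (\<lambda>\<gamma>. a * diff_op n q d f \<gamma> + b * diff_op n q d g \<gamma>)"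
  unfolding diff_op_def pdiff_lincomb pmul_lincomb_right
  by (auto simp: sum.distrib sum_distrib_left intro!: ext)

lemma pol_linear_diff_op: "pol_linear n (diff_op n q d)"
  by (simp add: pol_linear_def diff_op_lincomb)

lemma diff_op_Pd:
  assumes q: "\<forall>\<alpha>. supported n \<alpha> \<longrightarrow> q \<alpha> \<in> Pd n (mdeg n \<alpha>)" and p: "p \<in> Pd n d"
  shows "diff_op n q d p \<in> Pd n d"
  unfolding diff_op_def
proof (rule Pd_sum)
  fix \<alpha> assume "\<alpha> \<in> Mon n d"
  then have "q \<alpha> \<in> Pd n (mdeg n \<alpha>)" and "mdeg n \<alpha> + (d - mdeg n \<alpha>) = d"
    using q by (auto simp: Mon_iff)
  then show "pmul (q \<alpha>) (pdiff n \<alpha> p) \<in> Pd n d"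
    using pmul_Pd[OF _ pdiff_Pd[OF p]] by metis
qed

lemma
  assumes "A \<in> dops n"
  shows dops_pol_linear: "pol_linear n A" and dops_deg_preserving: "deg_preserving n A"
proof -
  obtain q where q: "\<forall>\<alpha>. supported n \<alpha> \<longrightarrow> q \<alpha> \<in> Pd n (mdeg n \<alpha>)"
    and A: "\<forall>d. \<forall>p\<in>Pd n d. A p = diff_op n q d p"
    using assms unfolding dops_iff by blast
  show "deg_preserving n A"
    unfolding deg_preserving_def using A diff_op_Pd[OF q] by auto
  show "pol_linear n A"
    unfolding pol_linear_def
  proof (intro ballI allI)
    fix f g a b assume "f \<in> Pol n" "g \<in> Pol n"
    then obtain d where f: "f \<in> Pd n d" and g: "g \<in> Pd n d" by (rule Pol_common_degree)
    have "A (\<lambda>\<gamma>. a * f \<gamma> + b * g \<gamma>) = diff_op n q d (\<lambda>\<gamma>. a * f \<gamma> + b * g \<gamma>)"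
      using A Pd_lincomb[OF f g] by blast
    with A f g show "A (\<lambda>\<gamma>. a * f \<gamma> + b * g \<gamma>) = (\<lambda>\<gamma>. a * A f \<gamma> + b * A g \<gamma>)"
      by (simp add: diff_op_lincomb)
  qed
qed

definition mfact :: "nat \<Rightarrow> mono \<Rightarrow> real" where
  "mfact n \<beta> = (\<Prod>i<n. fact (\<beta> i))"

text \<open>Coefficients of a degree-preserving linear map T as an element of frak-d: solve
  T x^\<beta> = \<Sum>\<alpha>\<le>\<beta>. q_\<alpha> \<partial>^\<alpha> x^\<beta> for q_\<beta>, whose term there is \<beta>! q_\<beta>.\<close>
function dop_coeff :: "nat \<Rightarrow> (rpoly \<Rightarrow> rpoly) \<Rightarrow> mono \<Rightarrow> rpoly" where
  "dop_coeff n T \<beta> =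
     (if supported n \<beta>
      then (\<lambda>\<gamma>. (T (monomial \<beta>) \<gamma> -
              (\<Sum>\<alpha>\<in>{..<\<beta>}. pmul (dop_coeff n T \<alpha>) (pdiff n \<alpha> (monomial \<beta>)) \<gamma>)) / mfact n \<beta>)
      else (\<lambda>\<gamma>. 0))"
  by pat_completeness auto
termination
  by (relation "Wellfounded.measure (\<lambda>(n, T, \<beta>). mdeg n \<beta>)") (simp_all add: mdeg_strict_mono)

declare dop_coeff.simps [simp del]

lemma dop_coeff_supported:
  "supported n \<beta> \<Longrightarrow> dop_coeff n T \<beta> = (\<lambda>\<gamma>. (T (monomial \<beta>) \<gamma> -
     (\<Sum>\<alpha>\<in>{..<\<beta>}. pmul (dop_coeff n T \<alpha>) (pdiff n \<alpha> (monomial \<beta>)) \<gamma>)) / mfact n \<beta>)"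
  by (simp add: dop_coeff.simps)

lemma mfact_pos: "mfact n \<beta> > 0"
  unfolding mfact_def by (intro prod_pos) auto

lemma pmul_pdiff_monomial_Pd:
  assumes "q \<in> Pd n (mdeg n \<alpha>)" and "supported n \<beta>" and "\<alpha> \<le> \<beta>"
  shows "pmul q (pdiff n \<alpha> (monomial \<beta>)) \<in> Pd n (mdeg n \<beta>)"
proof -
  have "mdeg n \<alpha> + (mdeg n \<beta> - mdeg n \<alpha>) = mdeg n \<beta>"
    using mdeg_mono[OF \<open>\<alpha> \<le> \<beta>\<close>] by simp
  then show ?thesis
    using pmul_Pd[OF assms(1) pdiff_Pd[OF monomial_in_Pd_mdeg[OF assms(2)]]] by metis
qed

lemma dop_coeff_Pd:
  assumes T: "deg_preserving n T"
  shows "supported n \<beta> \<Longrightarrow> dop_coeff n T \<beta> \<in> Pd n (mdeg n \<beta>)"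
proof (induction "mdeg n \<beta>" arbitrary: \<beta> rule: less_induct)
  case less
  have "(\<lambda>\<gamma>. \<Sum>\<alpha>\<in>{..<\<beta>}. pmul (dop_coeff n T \<alpha>) (pdiff n \<alpha> (monomial \<beta>)) \<gamma>) \<in> Pd n (mdeg n \<beta>)"
  proof (rule Pd_sum)
    fix \<alpha> assume "\<alpha> \<in> {..<\<beta>}"
    then have "\<alpha> < \<beta>" by simp
    then have "dop_coeff n T \<alpha> \<in> Pd n (mdeg n \<alpha>)"
      using less supported_le mdeg_strict_mono by (meson less_imp_le)
    with less.prems \<open>\<alpha> < \<beta>\<close> show "pmul (dop_coeff n T \<alpha>) (pdiff n \<alpha> (monomial \<beta>)) \<in> Pd n (mdeg n \<beta>)"
      by (simp add: pmul_pdiff_monomial_Pd)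
  qed
  moreover have "T (monomial \<beta>) \<in> Pd n (mdeg n \<beta>)"
    using deg_preservingD[OF T monomial_in_Pd_mdeg[OF less.prems]] .
  ultimately show ?case
    unfolding dop_coeff_supported[OF less.prems] by (intro Pd_divide Pd_diff)
qed

lemma diff_op_dop_coeff_monomial:
  assumes T: "deg_preserving n T" and \<beta>: "\<beta> \<in> Mon n d"
  shows "diff_op n (dop_coeff n T) d (monomial \<beta>) = T (monomial \<beta>)"
proof
  fix \<gamma>
  let ?term = "\<lambda>\<alpha>. pmul (dop_coeff n T \<alpha>) (pdiff n \<alpha> (monomial \<beta>)) \<gamma>"
  have \<beta>_supp: "supported n \<beta>" using \<beta> by (simp add: Mon_iff)
  have "{..\<beta>} \<subseteq> Mon n d"
  proof
    fix \<alpha> assume "\<alpha> \<in> {..\<beta>}"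
    with \<beta> show "\<alpha> \<in> Mon n d"
      using supported_le mdeg_mono[of \<alpha> \<beta> n] by (auto simp: Mon_iff)
  qed
  then have "diff_op n (dop_coeff n T) d (monomial \<beta>) \<gamma> = (\<Sum>\<alpha>\<in>{..\<beta>}. ?term \<alpha>)"
    unfolding diff_op_def
    by (intro sum.mono_neutral_right[OF finite_Mon]) (auto simp: pdiff_monomial pmul_def)
  also have "\<dots> = ?term \<beta> + (\<Sum>\<alpha>\<in>{..<\<beta>}. ?term \<alpha>)"
  proof -
    have "{..\<beta>} = insert \<beta> {..<\<beta>}" by auto
    moreover have "finite {..<\<beta>}"
      using finite_atMost_supported[OF \<beta>_supp] by (rule finite_subset[rotated]) auto
    ultimately show ?thesis by simp
  qed
  also have "?term \<beta> = mfact n \<beta> * dop_coeff n T \<beta> \<gamma>"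
    using Pd_subset_Pol[OF dop_coeff_Pd[OF T \<beta>_supp]]
    by (simp add: pdiff_monomial pmul_scale_right pmul_monomial_zero_right mfact_def)
  also have "mfact n \<beta> * dop_coeff n T \<beta> \<gamma> = T (monomial \<beta>) \<gamma> - (\<Sum>\<alpha>\<in>{..<\<beta>}. ?term \<alpha>)"
    using mfact_pos[of n \<beta>] by (simp add: dop_coeff_supported[OF \<beta>_supp])
  finally show "diff_op n (dop_coeff n T) d (monomial \<beta>) \<gamma> = T (monomial \<beta>) \<gamma>" by simp
qed

theorem deg_preserving_linear_in_dops:
  assumes T: "pol_linear n T" "deg_preserving n T"
  shows "T \<in> dops n"
  unfolding dops_iff
proof (intro exI conjI allI impI ballI)
  show "dop_coeff n T \<alpha> \<in> Pd n (mdeg n \<alpha>)" if "supported n \<alpha>" for \<alpha>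
    using dop_coeff_Pd[OF T(2) that] .
  fix d p assume p: "p \<in> Pd n d"
  have "T p = (\<lambda>\<gamma>. \<Sum>\<beta>\<in>Mon n d. p \<beta> * T (monomial \<beta>) \<gamma>)"
    by (rule pol_linear_monomial_expansion[OF T(1) p])
  also have "\<dots> = (\<lambda>\<gamma>. \<Sum>\<beta>\<in>Mon n d. p \<beta> * diff_op n (dop_coeff n T) d (monomial \<beta>) \<gamma>)"
    by (simp add: diff_op_dop_coeff_monomial[OF T(2)])
  also have "\<dots> = diff_op n (dop_coeff n T) d p"
    by (rule pol_linear_monomial_expansion[OF pol_linear_diff_op p, symmetric])
  finally show "T p = diff_op n (dop_coeff n T) d p" .
qed

section \<open>The exponential series\<close>

definition coeff_norm :: "nat \<Rightarrow> nat \<Rightarrow> rpoly \<Rightarrow> real" where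
  "coeff_norm n d p = (\<Sum>\<beta>\<in>Mon n d. \<bar>p \<beta>\<bar>)"

lemma coeff_norm_nonneg: "coeff_norm n d p \<ge> 0"
  unfolding coeff_norm_def by (intro sum_nonneg) auto

lemma abs_coeff_le_coeff_norm:
  assumes "p \<in> Pd n d"
  shows "\<bar>p \<gamma>\<bar> \<le> coeff_norm n d p"
proof (cases "\<gamma> \<in> Mon n d")
  case True
  then show ?thesis unfolding coeff_norm_def by (intro member_le_sum finite_Mon) auto
next
  case False
  with assms show ?thesis by (simp add: PdD coeff_norm_nonneg)
qed

lemma pol_linear_coeff_norm_bound:
  assumes T: "pol_linear n T"
  obtains M where "M \<ge> 0" and "\<And>p. p \<in> Pd n d \<Longrightarrow> coeff_norm n d (T p) \<le> M * coeff_norm n d p"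
proof
  define M where "M = (\<Sum>\<beta>\<in>Mon n d. coeff_norm n d (T (monomial \<beta>)))"
  show "M \<ge> 0" unfolding M_def by (intro sum_nonneg coeff_norm_nonneg)
  fix p assume p: "p \<in> Pd n d"
  have "coeff_norm n d (T p) = (\<Sum>\<gamma>\<in>Mon n d. \<bar>\<Sum>\<beta>\<in>Mon n d. p \<beta> * T (monomial \<beta>) \<gamma>\<bar>)"
    unfolding coeff_norm_def by (subst pol_linear_monomial_expansion[OF T p]) simp
  also have "\<dots> \<le> (\<Sum>\<gamma>\<in>Mon n d. \<Sum>\<beta>\<in>Mon n d. \<bar>p \<beta>\<bar> * \<bar>T (monomial \<beta>) \<gamma>\<bar>)"
    by (intro sum_mono order_trans[OF sum_abs]) (simp add: abs_mult)
  also have "\<dots> = (\<Sum>\<beta>\<in>Mon n d. \<bar>p \<beta>\<bar> * coeff_norm n d (T (monomial \<beta>)))"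
    by (subst sum.swap) (simp add: coeff_norm_def sum_distrib_left)
  also have "\<dots> \<le> (\<Sum>\<beta>\<in>Mon n d. \<bar>p \<beta>\<bar> * M)"
    unfolding M_def
    by (intro sum_mono mult_left_mono member_le_sum finite_Mon coeff_norm_nonneg) auto
  also have "\<dots> = M * coeff_norm n d p"
    by (simp add: coeff_norm_def sum_distrib_left mult.commute)
  finally show "coeff_norm n d (T p) \<le> M * coeff_norm n d p" .
qed

lemma summable_exp_series_times:
  fixes x c :: real
  shows "summable (\<lambda>k. x ^ k / fact k * c)"
  using summable_mult2[OF summable_exp[of x], of c] by (simp add: field_simps)

lemma op_exp_zero: "op_exp 0 A p = p"
  unfolding op_exp_def by (subst suminf_finite[of "{0}"]) auto

context
  fixes n :: nat and A :: "rpoly \<Rightarrow> rpoly"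
  assumes A_linear: "pol_linear n A" and A_deg: "deg_preserving n A"
begin

lemma funpow_Pd: "p \<in> Pd n d \<Longrightarrow> (A ^^ k) p \<in> Pd n d"
  by (rule deg_preservingD[OF deg_preserving_funpow[OF A_linear A_deg]])

lemma funpow_coeff_bound:
  "\<exists>M\<ge>0. \<forall>p\<in>Pd n d. \<forall>k \<gamma>. \<bar>(A ^^ k) p \<gamma>\<bar> \<le> M ^ k * coeff_norm n d p"
proof -
  obtain M where M: "M \<ge> 0" "\<And>p. p \<in> Pd n d \<Longrightarrow> coeff_norm n d (A p) \<le> M * coeff_norm n d p"
    using pol_linear_coeff_norm_bound[OF A_linear] by blast
  have norm_bound: "coeff_norm n d ((A ^^ k) p) \<le> M ^ k * coeff_norm n d p" if p: "p \<in> Pd n d" for p k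
  proof (induction k)
    case (Suc k)
    have "coeff_norm n d ((A ^^ Suc k) p) \<le> M * coeff_norm n d ((A ^^ k) p)"
      using M(2) funpow_Pd[OF p] by simp
    also have "\<dots> \<le> M * (M ^ k * coeff_norm n d p)"
      using Suc M(1) by (intro mult_left_mono)
    finally show ?case by simp
  qed simp
  have "\<bar>(A ^^ k) p \<gamma>\<bar> \<le> M ^ k * coeff_norm n d p" if p: "p \<in> Pd n d" for p k \<gamma>
    using abs_coeff_le_coeff_norm[OF funpow_Pd[OF p]] norm_bound[OF p, of k] by (rule order_trans)
  with M(1) show ?thesis by blast
qed

lemma exp_series_abs_summable:
  assumes p: "p \<in> Pd n d"
  shows "summable (\<lambda>k. \<bar>t ^ k / fact k * (A ^^ k) p \<gamma>\<bar>)"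
proof -
  obtain M where M: "M \<ge> 0" "\<And>k. \<bar>(A ^^ k) p \<gamma>\<bar> \<le> M ^ k * coeff_norm n d p"
    using funpow_coeff_bound[of d] p by blast
  show ?thesis
  proof (rule summable_comparison_test'[OF summable_exp_series_times])
    fix k
    have "\<bar>t ^ k / fact k * (A ^^ k) p \<gamma>\<bar> = \<bar>t\<bar> ^ k / fact k * \<bar>(A ^^ k) p \<gamma>\<bar>"
      by (simp add: abs_mult power_abs)
    also have "\<dots> \<le> \<bar>t\<bar> ^ k / fact k * (M ^ k * coeff_norm n d p)"
      using M by (intro mult_left_mono) auto
    finally show "norm \<bar>t ^ k / fact k * (A ^^ k) p \<gamma>\<bar> \<le> (\<bar>t\<bar> * M) ^ k / fact k * coeff_norm n d p"
      by (simp add: power_mult_distrib)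
  qed
qed

lemma exp_series_summable: "p \<in> Pd n d \<Longrightarrow> summable (\<lambda>k. t ^ k / fact k * (A ^^ k) p \<gamma>)"
  using summable_rabs_cancel[OF exp_series_abs_summable] .

lemma deg_preserving_op_exp: "deg_preserving n (op_exp t A)"
  unfolding deg_preserving_def op_exp_def using funpow_Pd by (auto simp: Pd_iff)

lemma pol_linear_op_exp: "pol_linear n (op_exp t A)"
  unfolding pol_linear_def
proof (intro ballI allI)
  fix p q a b assume "p \<in> Pol n" "q \<in> Pol n"
  then obtain d where p: "p \<in> Pd n d" and q: "q \<in> Pd n d" by (rule Pol_common_degree)
  have Ak: "(A ^^ k) (\<lambda>\<gamma>. a * p \<gamma> + b * q \<gamma>) = (\<lambda>\<gamma>. a * (A ^^ k) p \<gamma> + b * (A ^^ k) q \<gamma>)" for k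
    using pol_linearD[OF pol_linear_funpow[OF A_linear A_deg]] p q Pd_subset_Pol by blast
  show "op_exp t A (\<lambda>\<gamma>. a * p \<gamma> + b * q \<gamma>) = (\<lambda>\<gamma>. a * op_exp t A p \<gamma> + b * op_exp t A q \<gamma>)"
  proof
    fix \<gamma>
    have "(\<lambda>k. t ^ k / fact k * (A ^^ k) (\<lambda>\<gamma>. a * p \<gamma> + b * q \<gamma>) \<gamma>) sums
        (a * op_exp t A p \<gamma> + b * op_exp t A q \<gamma>)"
      unfolding op_exp_def Ak
      using sums_add[OF sums_mult[OF summable_sums[OF exp_series_summable[OF p]], of a]
                        sums_mult[OF summable_sums[OF exp_series_summable[OF q]], of b]]
      by (simp add: algebra_simps)
    then show "op_exp t A (\<lambda>\<gamma>. a * p \<gamma> + b * q \<gamma>) \<gamma> = a * op_exp t A p \<gamma> + b * op_exp t A q \<gamma>"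
      by (simp add: op_exp_def sums_iff)
  qed
qed

lemma funpow_monomial_expansion:
  assumes "p \<in> Pd n d"
  shows "(\<Sum>\<beta>\<in>Mon n d. (A ^^ k) p \<beta> * (A ^^ j) (monomial \<beta>) \<gamma>) = (A ^^ (j + k)) p \<gamma>"
  using pol_linear_monomial_expansion[OF pol_linear_funpow[OF A_linear A_deg] funpow_Pd[OF assms], of j]
  by (simp add: funpow_add)

lemma exp_series_cauchy_term:
  assumes p: "p \<in> Pd n d"
  shows "(\<Sum>\<beta>\<in>Mon n d. \<Sum>i\<le>m. (s ^ i / fact i * (A ^^ i) (monomial \<beta>) \<gamma>) *
            (t ^ (m - i) / fact (m - i) * (A ^^ (m - i)) p \<beta>))
       = (s + t) ^ m / fact m * (A ^^ m) p \<gamma>"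
proof -
  have "(\<Sum>\<beta>\<in>Mon n d. \<Sum>i\<le>m. (s ^ i / fact i * (A ^^ i) (monomial \<beta>) \<gamma>) *
            (t ^ (m - i) / fact (m - i) * (A ^^ (m - i)) p \<beta>))
      = (\<Sum>i\<le>m. s ^ i / fact i * (t ^ (m - i) / fact (m - i)) *
            (\<Sum>\<beta>\<in>Mon n d. (A ^^ (m - i)) p \<beta> * (A ^^ i) (monomial \<beta>) \<gamma>))"
    by (subst sum.swap) (simp add: sum_distrib_left mult_ac)
  also have "\<dots> = (\<Sum>i\<le>m. s ^ i / fact i * (t ^ (m - i) / fact (m - i))) * (A ^^ m) p \<gamma>"
    by (simp add: funpow_monomial_expansion[OF p] sum_distrib_right)
  also have "\<dots> = (s + t) ^ m / fact m * (A ^^ m) p \<gamma>"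
    using exp_series_add_commuting[of s t m] by (simp add: divide_inverse_commute)
  finally show ?thesis .
qed

lemma op_exp_add:
  assumes p: "p \<in> Pd n d"
  shows "op_exp s A (op_exp t A p) = op_exp (s + t) A p"
proof
  fix \<gamma>
  define x where "x \<beta> j = s ^ j / fact j * (A ^^ j) (monomial \<beta>) \<gamma>" for \<beta> j
  define y where "y \<beta> k = t ^ k / fact k * (A ^^ k) p \<beta>" for \<beta> k
  have x_summable: "summable (\<lambda>j. norm (x \<beta> j))" if "\<beta> \<in> Mon n d" for \<beta>
    unfolding x_def real_norm_def using exp_series_abs_summable[OF monomial_in_Pd[OF that]] .
  have y_summable: "summable (\<lambda>k. norm (y \<beta> k))" for \<beta>
    unfolding y_def real_norm_def using exp_series_abs_summable[OF p] .
  have "op_exp s A (op_exp t A p) \<gamma> = (\<Sum>\<beta>\<in>Mon n d. op_exp t A p \<beta> * op_exp s A (monomial \<beta>) \<gamma>)"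
    by (subst pol_linear_monomial_expansion[OF pol_linear_op_exp deg_preservingD[OF deg_preserving_op_exp p]])
       simp
  also have "\<dots> = (\<Sum>\<beta>\<in>Mon n d. (\<Sum>j. x \<beta> j) * (\<Sum>k. y \<beta> k))"
    by (simp add: op_exp_def x_def y_def mult.commute)
  also have "\<dots> = (\<Sum>\<beta>\<in>Mon n d. \<Sum>m. \<Sum>i\<le>m. x \<beta> i * y \<beta> (m - i))"
    using x_summable y_summable by (intro sum.cong refl Cauchy_product) auto
  also have "\<dots> = (\<Sum>m. \<Sum>\<beta>\<in>Mon n d. \<Sum>i\<le>m. x \<beta> i * y \<beta> (m - i))"
    using x_summable y_summable
    by (intro suminf_sum[symmetric] sums_summable[OF Cauchy_product_sums]) auto
  also have "\<dots> = op_exp (s + t) A p \<gamma>"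
    unfolding op_exp_def x_def y_def exp_series_cauchy_term[OF p] ..
  finally show "op_exp s A (op_exp t A p) \<gamma> = op_exp (s + t) A p \<gamma>" .
qed

lemma op_exp_inverse: "p \<in> Pol n \<Longrightarrow> op_exp (- t) A (op_exp t A p) = p"
  by (auto simp: Pol_iff op_exp_add op_exp_zero)

lemma inj_on_op_exp: "inj_on (op_exp t A) (Pol n)"
  by (rule inj_on_inverseI[where g = "op_exp (- t) A"]) (rule op_exp_inverse)

end

section \<open>Euler approximation of the exponential\<close>

definition euler_step :: "real \<Rightarrow> (rpoly \<Rightarrow> rpoly) \<Rightarrow> rpoly \<Rightarrow> rpoly" where
  "euler_step c A p = padd p (pscale c (A p))"

lemma binomial_sum_Suc:
  fixes a :: "nat \<Rightarrow> real"
  shows "(\<Sum>j\<le>Suc k. of_nat (Suc k choose j) * c ^ j * a j) =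
    (\<Sum>j\<le>k. of_nat (k choose j) * c ^ j * a j) + c * (\<Sum>j\<le>k. of_nat (k choose j) * c ^ j * a (Suc j))"
proof -
  have shifted: "(\<Sum>j\<le>k. of_nat (k choose j) * c ^ j * a j) =
      a 0 + (\<Sum>j\<le>k. of_nat (k choose Suc j) * c ^ Suc j * a (Suc j))"
    by (subst sum.atMost_shift) (simp add: lessThan_Suc_atMost[symmetric])
  have "(\<Sum>j\<le>Suc k. of_nat (Suc k choose j) * c ^ j * a j) =
      a 0 + (\<Sum>j\<le>k. of_nat (Suc k choose Suc j) * c ^ Suc j * a (Suc j))"
    by (subst sum.atMost_Suc_shift) simp
  also have "\<dots> = a 0 + (\<Sum>j\<le>k. of_nat (k choose Suc j) * c ^ Suc j * a (Suc j))
      + (\<Sum>j\<le>k. of_nat (k choose j) * c ^ Suc j * a (Suc j))"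
    by (simp add: sum.distrib algebra_simps)
  also have "\<dots> = (\<Sum>j\<le>k. of_nat (k choose j) * c ^ j * a j) + c * (\<Sum>j\<le>k. of_nat (k choose j) * c ^ j * a (Suc j))"
    unfolding shifted by (simp add: sum_distrib_left mult_ac)
  finally show ?thesis .
qed

lemma funpow_euler_step:
  assumes A: "pol_linear n A" "deg_preserving n A" and p: "p \<in> Pd n d"
  shows "(euler_step c A ^^ k) p = (\<lambda>\<gamma>. \<Sum>j\<le>k. of_nat (k choose j) * c ^ j * (A ^^ j) p \<gamma>)"
proof (induction k)
  case (Suc k)
  have "A (\<lambda>\<gamma>. \<Sum>j\<le>k. of_nat (k choose j) * c ^ j * (A ^^ j) p \<gamma>)
      = (\<lambda>\<gamma>. \<Sum>j\<le>k. of_nat (k choose j) * c ^ j * (A ^^ Suc j) p \<gamma>)"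
    using pol_linear_sum[OF A(1) finite_atMost funpow_Pd[OF A p]]
    by simp
  with Suc show ?case
    unfolding binomial_sum_Suc by (simp add: euler_step_def padd_def pscale_def)
qed simp

lemma binomial_scaled_le:
  fixes t :: real
  assumes "t \<ge> 0"
  shows "of_nat (m choose j) * (t / real m) ^ j \<le> t ^ j / fact j"
proof (cases "m = 0")
  case True
  with assms show ?thesis by (cases j) auto
next
  case False
  have "of_nat (m choose j) * fact j \<le> real m ^ j"
    using binomial_fact_pow[of m j] by (metis of_nat_fact of_nat_le_iff of_nat_mult of_nat_power)
  then have "t ^ j * (of_nat (m choose j) * fact j) \<le> t ^ j * real m ^ j"
    using assms by (intro mult_left_mono) auto
  with False show ?thesis
    by (simp add: power_divide field_simps mult_ac)
qed

lemma binomial_scaled_tendsto: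
  fixes t :: real
  shows "(\<lambda>m. of_nat (m choose j) * (t / real m) ^ j) \<longlonglongrightarrow> t ^ j / fact j"
proof -
  have factor: "(\<lambda>m. (real m - real i) * (t / real m)) \<longlonglongrightarrow> t" for i
  proof -
    have "(\<lambda>m. t - (real i * t) / real m) \<longlonglongrightarrow> t - 0"
      by (intro tendsto_diff tendsto_const lim_const_over_n)
    moreover have "\<forall>\<^sub>F m in sequentially. t - (real i * t) / real m = (real m - real i) * (t / real m)"
      using eventually_gt_at_top[of 0] by eventually_elim (simp add: field_simps)
    ultimately show ?thesis using Lim_transform_eventually by fastforce
  qed
  have "of_nat (m choose j) * (t / real m) ^ j = (\<Prod>i<j. (real m - real i) * (t / real m)) / fact j" for m
  proof -
    have "of_nat (m choose j) = (\<Prod>i<j. real m - real i) / fact j"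
      by (simp add: binomial_gbinomial gbinomial_prod_rev atLeast0LessThan)
    then show ?thesis by (simp only: prod.distrib prod_constant card_lessThan) simp
  qed
  moreover have "(\<lambda>m. (\<Prod>i<j. (real m - real i) * (t / real m)) / fact j) \<longlonglongrightarrow> (\<Prod>i<j. t) / fact j"
    by (intro tendsto_divide tendsto_prod factor tendsto_const) auto
  ultimately show ?thesis by simp
qed

lemma binomial_sum_tendsto_exp_series:
  fixes a :: "nat \<Rightarrow> real" and t M N :: real
  assumes t: "t \<ge> 0" and M: "M \<ge> 0" and bound: "\<And>j. \<bar>a j\<bar> \<le> M ^ j * N"
  shows "(\<lambda>m. \<Sum>j\<le>m. of_nat (m choose j) * (t / real m) ^ j * a j) \<longlonglongrightarrow> (\<Sum>j. t ^ j / fact j * a j)"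
proof -
  define f where "f j m = of_nat (m choose j) * (t / real m) ^ j * a j" for j m
  have bound_f: "norm (f j m) \<le> (t * M) ^ j / fact j * N" for j m
  proof -
    have "norm (f j m) = of_nat (m choose j) * (t / real m) ^ j * \<bar>a j\<bar>"
      using t by (simp add: f_def abs_mult)
    also have "\<dots> \<le> t ^ j / fact j * (M ^ j * N)"
      using binomial_scaled_le[OF t, of m j] bound[of j] t by (intro mult_mono) auto
    finally show ?thesis by (simp add: power_mult_distrib)
  qed
  have "(\<lambda>m. \<Sum>j. f j m) \<longlonglongrightarrow> (\<Sum>j. t ^ j / fact j * a j)"
  proof (rule conjunct2[OF conjunct2[OF tannerys_theorem]])
    show "(\<lambda>m. f j m) \<longlonglongrightarrow> t ^ j / fact j * a j" for j
      unfolding f_def by (intro tendsto_mult binomial_scaled_tendsto tendsto_const)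
    show "\<forall>\<^sub>F (j, m) in at_top \<times>\<^sub>F sequentially. norm (f j m) \<le> (t * M) ^ j / fact j * N"
      using bound_f by (simp add: always_eventually case_prod_beta)
    show "summable (\<lambda>j. (t * M) ^ j / fact j * N)"
      by (rule summable_exp_series_times)
  qed simp
  moreover have "(\<Sum>j. f j m) = (\<Sum>j\<le>m. of_nat (m choose j) * (t / real m) ^ j * a j)" for m
    by (subst suminf_finite[of "{..m}"]) (auto simp: f_def binomial_eq_0)
  ultimately show ?thesis by simp
qed

lemma tendsto_fun_iff_pointwise:
  fixes f :: "'b \<Rightarrow> 'a \<Rightarrow> real"
  shows "(f \<longlongrightarrow> l) F \<longleftrightarrow> (\<forall>i. ((\<lambda>c. f c i) \<longlongrightarrow> l i) F)"
  using limitin_componentwise[of "\<lambda>_. euclidean" UNIV f l F]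
  unfolding euclidean_product_topology limitin_canonical_iff by simp

lemma euler_tendsto_op_exp:
  assumes A: "pol_linear n A" "deg_preserving n A" and p: "p \<in> Pd n d" and t: "t \<ge> 0"
  shows "(\<lambda>m. (euler_step (t / real m) A ^^ m) p) \<longlonglongrightarrow> op_exp t A p"
  unfolding tendsto_fun_iff_pointwise
proof
  fix \<gamma>
  obtain M where "M \<ge> 0" and "\<And>j. \<bar>(A ^^ j) p \<gamma>\<bar> \<le> M ^ j * coeff_norm n d p"
    using funpow_coeff_bound[OF A, of d] p by blast
  then have "(\<lambda>m. \<Sum>j\<le>m. of_nat (m choose j) * (t / real m) ^ j * (A ^^ j) p \<gamma>)
      \<longlonglongrightarrow> (\<Sum>j. t ^ j / fact j * (A ^^ j) p \<gamma>)"
    by (intro binomial_sum_tendsto_exp_series[OF t])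
  then show "(\<lambda>m. (euler_step (t / real m) A ^^ m) p \<gamma>) \<longlonglongrightarrow> op_exp t A p \<gamma>"
    by (simp add: funpow_euler_step[OF A p] op_exp_def)
qed

lemma eventually_funpow_euler_step_in:
  assumes "\<epsilon> > 0" and "t \<ge> 0" and "p \<in> S"
    and step: "\<And>s. 0 \<le> s \<Longrightarrow> s < \<epsilon> \<Longrightarrow> \<forall>q\<in>S. euler_step s A q \<in> S"
  shows "\<forall>\<^sub>F m in sequentially. (euler_step (t / real m) A ^^ m) p \<in> S"
proof -
  obtain m0 :: nat where m0: "t / \<epsilon> < m0" using reals_Archimedean2 by blast
  have "(euler_step (t / real m) A ^^ m) p \<in> S" if "m \<ge> m0" for m
  proof -
    have "t / \<epsilon> < real m" using m0 that by (meson less_le_trans of_nat_le_iff)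
    then have "t < \<epsilon> * real m" using \<open>\<epsilon> > 0\<close> by (simp add: pos_divide_less_eq mult.commute)
    then have "0 \<le> t / real m" "t / real m < \<epsilon>"
      using \<open>t \<ge> 0\<close> \<open>\<epsilon> > 0\<close> by (auto simp: divide_less_eq zero_less_mult_iff)
    then have "(euler_step (t / real m) A ^^ k) p \<in> S" for k
      using step \<open>p \<in> S\<close> by (induction k) auto
    then show ?thesis .
  qed
  then show ?thesis by (auto simp: eventually_sequentially)
qed

lemma op_exp_invariant:
  assumes C: "C \<subseteq> Pol n" "LF_closed n C" and A: "pol_linear n A" "deg_preserving n A"
    and euler: "\<And>d. \<exists>\<epsilon>>0. \<forall>s. 0 \<le> s \<and> s < \<epsilon> \<longrightarrow>
                  (\<forall>p\<in>C \<inter> Pd n d. euler_step s A p \<in> C \<inter> Pd n d)"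
    and t: "t \<ge> 0"
  shows "op_exp t A ` C \<subseteq> C"
proof
  fix q assume "q \<in> op_exp t A ` C"
  then obtain p where "p \<in> C" and q: "q = op_exp t A p" by blast
  then have "p \<in> Pol n" using C(1) by blast
  then obtain d where p: "p \<in> C \<inter> Pd n d" using \<open>p \<in> C\<close> by (auto simp: Pol_iff)
  obtain T where "closed T" and CT: "C \<inter> Pd n d = Pd n d \<inter> T"
    using C(2) unfolding LF_closed_def closedin_closed by blast
  obtain \<epsilon> where "\<epsilon> > 0" and "\<forall>s. 0 \<le> s \<and> s < \<epsilon> \<longrightarrow> (\<forall>p\<in>C \<inter> Pd n d. euler_step s A p \<in> C \<inter> Pd n d)"
    using euler by blast
  then have "\<forall>\<^sub>F m in sequentially. (euler_step (t / real m) A ^^ m) p \<in> C \<inter> Pd n d"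
    using t p by (intro eventually_funpow_euler_step_in) auto
  then have "\<forall>\<^sub>F m in sequentially. (euler_step (t / real m) A ^^ m) p \<in> T"
    unfolding CT by (rule eventually_mono) blast
  then have "op_exp t A p \<in> T"
    using p by (intro Lim_in_closed_set[OF \<open>closed T\<close> _ sequentially_bot euler_tendsto_op_exp[OF A _ t]])
      auto
  moreover have "op_exp t A p \<in> Pd n d"
    using deg_preservingD[OF deg_preserving_op_exp[OF A]] p by blast
  ultimately show "q \<in> C" using CT q by blast
qed

theorem proposition5p5:
  fixes n :: nat and C :: "rpoly set" and A :: "rpoly \<Rightarrow> rpoly"
  assumes "C \<subseteq> Pol n"
    and "pconvex C"
    and "LF_closed n C"
    and "A \<in> dops n"
    and "\<forall>d. \<exists>\<epsilon>>0. \<forall>s::real. 0 \<le> s \<and> s < \<epsilon> \<longrightarrow>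
           (\<forall>p\<in>C \<inter> Pd n d. padd p (pscale s (A p)) \<in> C \<inter> Pd n d)"
  shows "A \<in> dops_C n C"
proof -
  have A: "pol_linear n A" "deg_preserving n A"
    using assms(4) by (rule dops_pol_linear, rule dops_deg_preserving)
  have euler: "\<exists>\<epsilon>>0. \<forall>s. 0 \<le> s \<and> s < \<epsilon> \<longrightarrow>
      (\<forall>p\<in>C \<inter> Pd n d. euler_step s A p \<in> C \<inter> Pd n d)" for d
    using assms(5) unfolding euler_step_def by blast
  have "op_exp t A \<in> Dops_C n C" if "t \<ge> 0" for t
    using deg_preserving_linear_in_dops[OF pol_linear_op_exp[OF A] deg_preserving_op_exp[OF A]]
      inj_on_op_exp[OF A] op_exp_invariant[OF assms(1,3) A euler that]
    unfolding Dops_C_def Dops_def by blast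
  then show ?thesis
    using assms(4) unfolding dops_C_def by blast
qed

end
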